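(* Consider any finite game in extensive form with perfect recall. Let $\bar\beta^1=(\bar\beta^1_i)_{i\in N}$ be a profile of full-support belief systems and let $\beta^1=(\beta^1_i)_{i\in N}$ be a profile of full-support beliefs in the associated normal form that is consistent with $\bar\beta^1$. Then for every player $i\in N$, $\bar L_i^1(\bar\beta^1)=L_i^1(\beta^1)$.
   Context: Setting: a finite extensive-form game with finite player set $N$, possibly moves of nature $c$ (treated as a player with singleton information sets, indifferent among outcomes), possibly simultaneous moves, imperfect information, finite horizon and perfect recall. $Z$ is the set of terminal histories; $u_i:Z\to\mathbb{R}$ is player $i$'s (Bernoulli) utility; $\mathcal{I}_i$ is the set of information sets of player $i$ and $A_i(I_i)$ the actions at $I_i$. A strategy $s_i$ assigns to each $I_i\in\mathcal{I}_i$ an action in $A_i(I_i)$; $S_i$ is the set of strategies, $S_{-i}$ is the product of the strategy sets of all other players together with nature (if nature moves). $z(s)$ is the terminal history reached by profile $s$. A profile $s_{-i}$ reaches $I_i$ if there is $s_i$ such that $(s_i,s_{-i})$ reaches $I_i$; $s_i$ reaches $I_i$ if there is $s_{-i}$ with $(s_i,s_{-i})$ reaching $I_i$. Let $S_{-i}(I_i)$ be the set of $s_{-i}$ reaching $I_i$. A belief system of $i$ is $\bar\beta_i=(\bar\beta_i(I_i))_{I_i\in\mathcal I_i}$ with $\bar\beta_i(I_i)\in\Delta(S_{-i})$, $\bar\beta_i(I_i)(S_{-i}(I_i))=1$, and such that if $I_i$ precedes $I_i'$ then $\bar\beta_i(I_i')$ is obtained from $\bar\beta_i(I_i)$ by conditioning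 on $S_{-i}(I_i')$ whenever this event has positive probability. It is full-support if each $\bar\beta_i(I_i)$ assigns positive probability to every element of $S_{-i}(I_i)$. A strategy $s_i'$ is an $I_i$-replacement of $s_i$ if it agrees with $s_i$ on all information sets strictly preceding $I_i$. Strategy $s_i$ is rational at $I_i$ with belief system $\bar\beta_i$ if either $s_i$ does not reach $I_i$, or no $I_i$-replacement of $s_i$ yields strictly higher expected utility $\sum_{s_{-i}}\bar\beta_i(I_i)(s_{-i})u_i(z(\cdot,s_{-i}))$ than $s_i$. Strong level-1: $\bar L_i^1(\bar\beta^1)=\{s_i\in S_i: s_i\text{ is rational at every } I_i\in\mathcal I_i \text{ with } \bar\beta^1_i\}$. Associated normal form: action sets $S_i$, utilities $s\mapsto u_i(z(s))$ (expected over nature if relevant via beliefs on $S_{-i}$). A belief $\beta^1_i\in\Delta(S_{-i})$ is full-support if it gives positive probability to every element of $S_{-i}$; it is consistent with $\bar\beta^1_i$ if $\bar\beta^1_i(I_i)=\beta^1_i(\cdot\mid S_{-i}(I_i))$ for every $I_i\in\mathcal I_i$. Normal-form level-1: $L_i^1(\beta^1)=\{s_i\in S_i: s_i \text{ maximizes } \sum_{s_{-i}}\beta^1_i(s_{-i})u_i(z(s_i,s_{-i}))\}$. *)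

theory Defs
  imports "HOL-Probability.Probability_Mass_Function" "HOL-Library.Sublist"
begin

text \<open>A move is a partial action profile: the active agents at a history each pick an
  action (Some a), inactive agents contribute None.  Histories are lists of moves.\<close>

type_synonym ('p, 'a) hist = "('p \<Rightarrow> 'a option) list"

record ('p, 'a) efg =
  agents  :: "'p set"                                  \<comment> \<open>players together with nature (if any)\<close>
  players :: "'p set"
  hist    :: "('p, 'a) hist set"
  acts    :: "('p, 'a) hist \<Rightarrow> 'p \<Rightarrow> 'a set"
  info    :: "'p \<Rightarrow> ('p, 'a) hist \<Rightarrow> ('p, 'a) hist set"
  util    :: "'p \<Rightarrow> ('p, 'a) hist \<Rightarrow> real"

definition active :: "('p, 'a) efg \<Rightarrow> ('p, 'a) hist \<Rightarrow> 'p \<Rightarrow> bool" where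
  "active G h j \<longleftrightarrow> h \<in> hist G \<and> j \<in> agents G \<and> acts G h j \<noteq> {}"

definition terminal :: "('p, 'a) efg \<Rightarrow> ('p, 'a) hist \<Rightarrow> bool" where
  "terminal G h \<longleftrightarrow> h \<in> hist G \<and> (\<forall>j. \<not> active G h j)"

definition infosets :: "('p, 'a) efg \<Rightarrow> 'p \<Rightarrow> ('p, 'a) hist set set" where
  "infosets G j = {info G j h | h. active G h j}"

definition exper :: "('p, 'a) efg \<Rightarrow> 'p \<Rightarrow> ('p, 'a) hist \<Rightarrow> (('p, 'a) hist set \<times> 'a) list" where
  "exper G j h = concat (map (\<lambda>k. if active G (take k h) j
        then [(info G j (take k h), the ((h ! k) j))] else []) [0..<length h])"

definition perfect_recall :: "('p, 'a) efg \<Rightarrow> bool" where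
  "perfect_recall G \<longleftrightarrow> (\<forall>j\<in>players G. \<forall>h h'. active G h j \<and> h' \<in> info G j h
        \<longrightarrow> exper G j h = exper G j h')"

definition wf_game :: "('p, 'a) efg \<Rightarrow> bool" where
  "wf_game G \<longleftrightarrow>
     finite (agents G) \<and> players G \<subseteq> agents G \<and> card (agents G - players G) \<le> 1 \<and>
     finite (hist G) \<and> [] \<in> hist G \<and>
     (\<forall>h\<in>hist G. \<forall>k. take k h \<in> hist G) \<and>
     (\<forall>h j. j \<notin> agents G \<longrightarrow> acts G h j = {}) \<and>
     (\<forall>h\<in>hist G. \<forall>m. h @ [m] \<in> hist G \<longleftrightarrow>
        (\<exists>j. active G h j) \<and>
        (\<forall>j. if active G h j then m j \<in> Some ` acts G h j else m j = None)) \<and>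
     (\<forall>h j. active G h j \<longrightarrow>
        h \<in> info G j h \<and>
        (\<forall>h'\<in>info G j h. active G h' j \<and> info G j h' = info G j h \<and> acts G h' j = acts G h j)) \<and>
     (\<forall>j\<in>agents G - players G. \<forall>h. active G h j \<longrightarrow> info G j h = {h})"

type_synonym ('p, 'a) strategy = "('p, 'a) hist set \<Rightarrow> 'a"
type_synonym ('p, 'a) profile = "'p \<Rightarrow> ('p, 'a) strategy"

definition strat :: "('p, 'a) efg \<Rightarrow> 'p \<Rightarrow> ('p, 'a) strategy set" where
  "strat G j = {s. (\<forall>I\<in>infosets G j. \<forall>h\<in>I. s I \<in> acts G h j) \<and>
                   (\<forall>I. I \<notin> infosets G j \<longrightarrow> s I = undefined)}"

text \<open>$S_{-i}$: profiles of all other agents (including nature); component i is undefined.\<close>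
definition oppstrat :: "('p, 'a) efg \<Rightarrow> 'p \<Rightarrow> ('p, 'a) profile set" where
  "oppstrat G i = (\<Pi>\<^sub>E j\<in>agents G - {i}. strat G j)"

definition consistent :: "('p, 'a) efg \<Rightarrow> ('p, 'a) profile \<Rightarrow> ('p, 'a) hist \<Rightarrow> bool" where
  "consistent G \<sigma> h \<longleftrightarrow> h \<in> hist G \<and>
     (\<forall>k<length h. \<forall>j. (h ! k) j =
        (if active G (take k h) j then Some (\<sigma> j (info G j (take k h))) else None))"

definition outcome :: "('p, 'a) efg \<Rightarrow> ('p, 'a) profile \<Rightarrow> ('p, 'a) hist" where
  "outcome G \<sigma> = (THE h. terminal G h \<and> consistent G \<sigma> h)"

definition reaches :: "('p, 'a) efg \<Rightarrow> ('p, 'a) profile \<Rightarrow> ('p, 'a) hist set \<Rightarrow> bool" where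
  "reaches G \<sigma> I \<longleftrightarrow> (\<exists>h\<in>I. prefix h (outcome G \<sigma>))"

definition oppreach :: "('p, 'a) efg \<Rightarrow> 'p \<Rightarrow> ('p, 'a) hist set \<Rightarrow> ('p, 'a) profile set" where
  "oppreach G i I = {\<tau> \<in> oppstrat G i. \<exists>s\<in>strat G i. reaches G (\<tau>(i := s)) I}"

definition strat_reaches :: "('p, 'a) efg \<Rightarrow> 'p \<Rightarrow> ('p, 'a) strategy \<Rightarrow> ('p, 'a) hist set \<Rightarrow> bool" where
  "strat_reaches G i s I \<longleftrightarrow> (\<exists>\<tau>\<in>oppstrat G i. reaches G (\<tau>(i := s)) I)"

definition precedes :: "('p, 'a) efg \<Rightarrow> ('p, 'a) hist set \<Rightarrow> ('p, 'a) hist set \<Rightarrow> bool" where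
  "precedes G I I' \<longleftrightarrow> (\<exists>h\<in>I. \<exists>h'\<in>I'. strict_prefix h h')"

definition replacement :: "('p, 'a) efg \<Rightarrow> 'p \<Rightarrow> ('p, 'a) hist set
     \<Rightarrow> ('p, 'a) strategy \<Rightarrow> ('p, 'a) strategy \<Rightarrow> bool" where
  "replacement G i I s s' \<longleftrightarrow> s' \<in> strat G i \<and>
     (\<forall>I'\<in>infosets G i. precedes G I' I \<longrightarrow> s' I' = s I')"

definition EU :: "('p, 'a) efg \<Rightarrow> 'p \<Rightarrow> ('p, 'a) profile pmf \<Rightarrow> ('p, 'a) strategy \<Rightarrow> real" where
  "EU G i b s = (\<Sum>\<tau>\<in>oppstrat G i. pmf b \<tau> * util G i (outcome G (\<tau>(i := s))))"

definition belief_system :: "('p, 'a) efg \<Rightarrow> 'p \<Rightarrow> (('p, 'a) hist set \<Rightarrow> ('p, 'a) profile pmf) \<Rightarrow> bool" where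
  "belief_system G i bs \<longleftrightarrow>
     (\<forall>I\<in>infosets G i. set_pmf (bs I) \<subseteq> oppreach G i I) \<and>
     (\<forall>I\<in>infosets G i. \<forall>I'\<in>infosets G i. precedes G I I' \<and>
        set_pmf (bs I) \<inter> oppreach G i I' \<noteq> {} \<longrightarrow> bs I' = cond_pmf (bs I) (oppreach G i I'))"

definition full_support_bs :: "('p, 'a) efg \<Rightarrow> 'p \<Rightarrow> (('p, 'a) hist set \<Rightarrow> ('p, 'a) profile pmf) \<Rightarrow> bool" where
  "full_support_bs G i bs \<longleftrightarrow> belief_system G i bs \<and>
     (\<forall>I\<in>infosets G i. oppreach G i I \<subseteq> set_pmf (bs I))"

definition rational_at :: "('p, 'a) efg \<Rightarrow> 'p \<Rightarrow> (('p, 'a) hist set \<Rightarrow> ('p, 'a) profile pmf)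
     \<Rightarrow> ('p, 'a) strategy \<Rightarrow> ('p, 'a) hist set \<Rightarrow> bool" where
  "rational_at G i bs s I \<longleftrightarrow> \<not> strat_reaches G i s I \<or>
     (\<forall>s'. replacement G i I s s' \<longrightarrow> EU G i (bs I) s' \<le> EU G i (bs I) s)"

definition strong_L1 :: "('p, 'a) efg \<Rightarrow> 'p \<Rightarrow> (('p, 'a) hist set \<Rightarrow> ('p, 'a) profile pmf)
     \<Rightarrow> ('p, 'a) strategy set" where
  "strong_L1 G i bs = {s \<in> strat G i. \<forall>I\<in>infosets G i. rational_at G i bs s I}"

definition full_support_nf :: "('p, 'a) efg \<Rightarrow> 'p \<Rightarrow> ('p, 'a) profile pmf \<Rightarrow> bool" where
  "full_support_nf G i b \<longleftrightarrow> set_pmf b = oppstrat G i"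

definition consistent_with :: "('p, 'a) efg \<Rightarrow> 'p \<Rightarrow> ('p, 'a) profile pmf
     \<Rightarrow> (('p, 'a) hist set \<Rightarrow> ('p, 'a) profile pmf) \<Rightarrow> bool" where
  "consistent_with G i b bs \<longleftrightarrow> (\<forall>I\<in>infosets G i. bs I = cond_pmf b (oppreach G i I))"

definition nf_L1 :: "('p, 'a) efg \<Rightarrow> 'p \<Rightarrow> ('p, 'a) profile pmf \<Rightarrow> ('p, 'a) strategy set" where
  "nf_L1 G i b = {s \<in> strat G i. \<forall>s'\<in>strat G i. EU G i b s' \<le> EU G i b s}"

end

theory Submission
  imports Defs
begin

text \<open>Consistency makes every conditional belief \<open>bbar i I\<close> the normal-form belief \<open>b i\<close>
  conditioned on \<open>S\<^sub>-\<^sub>i(I)\<close>, and full support makes all these conditionings well defined.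
  Perfect recall makes \<open>S\<^sub>-\<^sub>i(I)\<close> the same for every own strategy that reaches \<open>I\<close>.

  If \<open>s\<close> is normal-form optimal and an \<open>I\<close>-replacement \<open>s'\<close> did better at a reached \<open>I\<close>,
  then playing \<open>s'\<close> from \<open>I\<close> on and \<open>s\<close> elsewhere changes the payoff only against
  \<open>S\<^sub>-\<^sub>i(I)\<close>, where it improves on \<open>s\<close>; this contradicts optimality of \<open>s\<close>.

  Conversely, the opponent profiles split into those against which \<open>s\<close> never moves and the
  disjoint events \<open>S\<^sub>-\<^sub>i(I)\<close> for the information sets \<open>I\<close> at which player \<open>i\<close> moves first.
  Every strategy \<open>t\<close> is an \<open>I\<close>-replacement of \<open>s\<close> at such an \<open>I\<close>, so sequential rationality
  of \<open>s\<close> there, summed with positive weights, shows that \<open>t\<close> does no better than \<open>s\<close>.\<close>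

section \<open>Plays of a finite game\<close>

lemma wf_gameD:
  assumes "wf_game G"
  shows "finite (agents G)" "finite (hist G)" "[] \<in> hist G"
    "\<And>h k. h \<in> hist G \<Longrightarrow> take k h \<in> hist G"
    "\<And>h m. h \<in> hist G \<Longrightarrow> h @ [m] \<in> hist G \<longleftrightarrow> (\<exists>j. active G h j) \<and>
        (\<forall>j. if active G h j then m j \<in> Some ` acts G h j else m j = None)"
    "\<And>h j. active G h j \<Longrightarrow> h \<in> info G j h"
    "\<And>h j h'. active G h j \<Longrightarrow> h' \<in> info G j h \<Longrightarrow>
        active G h' j \<and> info G j h' = info G j h \<and> acts G h' j = acts G h j"
  using assms unfolding wf_game_def by (elim conjE; meson)+

lemma infosetsD:
  assumes "wf_game G" "I \<in> infosets G j" "h \<in> I"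
  shows "active G h j" "info G j h = I"
  using assms wf_gameD(7)[OF assms(1)] by (auto simp: infosets_def)

definition strategy_profile :: "('p, 'a) efg \<Rightarrow> ('p, 'a) profile \<Rightarrow> bool" where
  "strategy_profile G \<sigma> \<longleftrightarrow> (\<forall>j\<in>agents G. \<sigma> j \<in> strat G j)"

lemma strategy_profile_fun_upd:
  assumes "\<tau> \<in> oppstrat G i" "s \<in> strat G i"
  shows "strategy_profile G (\<tau>(i := s))"
  using assms by (auto simp: strategy_profile_def oppstrat_def PiE_def Pi_def)

lemma consistent_take:
  assumes "wf_game G" "consistent G \<sigma> h"
  shows "consistent G \<sigma> (take n h)"
  using assms unfolding consistent_def
  by (auto simp: wf_gameD(4)[OF assms(1)] min_def take_take)

lemma consistent_take_eq:
  assumes "consistent G \<sigma> h" "consistent G \<sigma> h'" "k \<le> length h" "k \<le> length h'"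
  shows "take k h = take k h'"
  using assms(3,4)
proof (induction k)
  case (Suc k)
  then have IH: "take k h = take k h'" by simp
  have "h ! k = h' ! k"
    using assms(1,2) Suc.prems IH unfolding consistent_def by (auto intro!: ext)
  then show ?case using Suc.prems IH by (simp add: take_Suc_conv_app_nth)
qed simp

lemma consistent_prefix_cases:
  assumes "consistent G \<sigma> h" "consistent G \<sigma> h'"
  shows "prefix h h' \<or> prefix h' h"
  using consistent_take_eq[OF assms, of "min (length h) (length h')"]
  by (metis min.absorb1 min.absorb2 nle_le take_all_iff take_is_prefix)

lemma terminal_not_strict_prefix:
  assumes wf: "wf_game G" and "terminal G h" "h' \<in> hist G"
  shows "\<not> strict_prefix h h'"
proof
  assume "strict_prefix h h'"
  then obtain m ms where "h' = h @ m # ms"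
    by (metis append.right_neutral neq_Nil_conv prefix_def strict_prefix_def)
  then have "h @ [m] \<in> hist G"
    using wf_gameD(4)[OF wf \<open>h' \<in> hist G\<close>, of "Suc (length h)"] by simp
  then show False
    using assms(2) wf_gameD(5)[OF wf] by (auto simp: terminal_def)
qed

lemma ex_terminal_consistent:
  assumes wf: "wf_game G" and \<sigma>: "strategy_profile G \<sigma>"
  shows "\<exists>h. terminal G h \<and> consistent G \<sigma> h"
proof -
  let ?C = "{h. consistent G \<sigma> h}"
  have fin: "finite ?C"
    using wf_gameD(2)[OF wf] by (rule finite_subset[rotated]) (auto simp: consistent_def)
  have "[] \<in> ?C" using wf_gameD(3)[OF wf] by (simp add: consistent_def)
  then have "Max (length ` ?C) \<in> length ` ?C" using fin by (intro Max_in) auto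
  then obtain h where h: "h \<in> ?C" and "length h = Max (length ` ?C)" by auto
  then have h: "consistent G \<sigma> h"
    and longest: "\<And>h'. consistent G \<sigma> h' \<Longrightarrow> length h' \<le> length h"
    using fin by auto
  have "terminal G h"
  proof (rule ccontr)
    assume "\<not> terminal G h"
    moreover have hh: "h \<in> hist G" using h by (simp add: consistent_def)
    ultimately have ex: "\<exists>j. active G h j" by (simp add: terminal_def)
    define m where "m j = (if active G h j then Some (\<sigma> j (info G j h)) else None)" for j
    have "\<sigma> j (info G j h) \<in> acts G h j" if "active G h j" for j
      using \<sigma> that wf_gameD(6)[OF wf that]
      by (auto simp: strategy_profile_def strat_def infosets_def active_def)
    then have "h @ [m] \<in> hist G" using wf_gameD(5)[OF wf hh] ex by (simp add: m_def)
    then have "consistent G \<sigma> (h @ [m])"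
      using h unfolding consistent_def by (auto simp: nth_append m_def less_Suc_eq)
    then show False using longest[of "h @ [m]"] by simp
  qed
  with h show ?thesis by blast
qed

lemma outcome_eqI:
  assumes wf: "wf_game G" and z: "terminal G z" "consistent G \<sigma> z"
  shows "outcome G \<sigma> = z"
  unfolding outcome_def
proof (rule the_equality)
  fix z' assume z': "terminal G z' \<and> consistent G \<sigma> z'"
  have "z' \<in> hist G" "z \<in> hist G" using z z' by (auto simp: consistent_def)
  then have "\<not> strict_prefix z z'" "\<not> strict_prefix z' z"
    using terminal_not_strict_prefix[OF wf] z z' by blast+
  then show "z' = z"
    using consistent_prefix_cases[OF z(2)] z' by (auto simp: strict_prefix_def)
qed (use z in blast)

lemma
  assumes "wf_game G" "strategy_profile G \<sigma>"
  shows terminal_outcome: "terminal G (outcome G \<sigma>)"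
    and consistent_outcome: "consistent G \<sigma> (outcome G \<sigma>)"
  using ex_terminal_consistent[OF assms] outcome_eqI[OF assms(1)] by metis+

lemma consistent_prefix_outcome:
  assumes wf: "wf_game G" and \<sigma>: "strategy_profile G \<sigma>" and h: "consistent G \<sigma> h"
  shows "prefix h (outcome G \<sigma>)"
  using consistent_prefix_cases[OF h consistent_outcome[OF wf \<sigma>]] h
    terminal_not_strict_prefix[OF wf terminal_outcome[OF wf \<sigma>]]
  by (auto simp: consistent_def strict_prefix_def)

lemma reaches_iff_consistent:
  assumes wf: "wf_game G" and \<sigma>: "strategy_profile G \<sigma>"
  shows "reaches G \<sigma> I \<longleftrightarrow> (\<exists>h\<in>I. consistent G \<sigma> h)"
proof
  assume "reaches G \<sigma> I"
  then obtain h where "h \<in> I" "prefix h (outcome G \<sigma>)" by (auto simp: reaches_def)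
  moreover have "consistent G \<sigma> (take (length h) (outcome G \<sigma>))"
    by (rule consistent_take[OF wf consistent_outcome[OF wf \<sigma>]])
  ultimately show "\<exists>h\<in>I. consistent G \<sigma> h" by (metis prefix_def append_eq_conv_conj)
qed (use consistent_prefix_outcome[OF wf \<sigma>] in \<open>auto simp: reaches_def\<close>)

lemma consistent_fun_upd_cong:
  assumes "consistent G (\<tau>(i := s)) h"
    "\<And>k. k < length h \<Longrightarrow> active G (take k h) i \<Longrightarrow>
      s' (info G i (take k h)) = s (info G i (take k h))"
  shows "consistent G (\<tau>(i := s')) h"
  using assms unfolding consistent_def by auto

lemma outcome_fun_upd_cong:
  assumes wf: "wf_game G" and \<tau>: "\<tau> \<in> oppstrat G i" and s: "s \<in> strat G i"
    and agree: "\<And>k. k < length (outcome G (\<tau>(i := s))) \<Longrightarrow>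
      active G (take k (outcome G (\<tau>(i := s)))) i \<Longrightarrow>
      s' (info G i (take k (outcome G (\<tau>(i := s))))) = s (info G i (take k (outcome G (\<tau>(i := s)))))"
  shows "outcome G (\<tau>(i := s')) = outcome G (\<tau>(i := s))"
proof -
  have \<sigma>: "strategy_profile G (\<tau>(i := s))" using \<tau> s by (rule strategy_profile_fun_upd)
  show ?thesis
    using consistent_fun_upd_cong[OF consistent_outcome[OF wf \<sigma>] agree]
    by (rule outcome_eqI[OF wf terminal_outcome[OF wf \<sigma>]])
qed

lemma finite_acts:
  assumes wf: "wf_game G" and a: "active G h j"
  shows "finite (acts G h j)"
proof -
  have hh: "h \<in> hist G" using a by (simp add: active_def)
  define m where "m x j' = (if j' = j then Some x
    else if active G h j' then Some (SOME y. y \<in> acts G h j') else None)" for x j'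
  have "h @ [m x] \<in> hist G" if x: "x \<in> acts G h j" for x
  proof -
    have "(SOME y. y \<in> acts G h j') \<in> acts G h j'" if "active G h j'" for j'
      using that by (simp add: active_def some_in_eq)
    then show ?thesis using wf_gameD(5)[OF wf hh] a x by (auto simp: m_def)
  qed
  then have "finite ((\<lambda>x. h @ [m x]) ` acts G h j)"
    using wf_gameD(2)[OF wf] by (blast intro: finite_subset)
  moreover have "inj_on (\<lambda>x. h @ [m x]) (acts G h j)"
    by (rule inj_onI) (simp add: m_def fun_eq_iff split: if_splits)
  ultimately show ?thesis by (rule finite_imageD)
qed

lemma finite_infosets:
  assumes "wf_game G"
  shows "finite (infosets G j)"
proof -
  have "infosets G j \<subseteq> info G j ` hist G" by (auto simp: infosets_def active_def)
  then show ?thesis using wf_gameD(2)[OF assms] finite_subset by blast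
qed

lemma finite_strat:
  assumes wf: "wf_game G"
  shows "finite (strat G j)"
proof (rule finite_subset)
  show "strat G j \<subseteq> (\<Pi>\<^sub>E I\<in>infosets G j. \<Union>h\<in>I. acts G h j)"
  proof
    fix s assume s: "s \<in> strat G j"
    have "s I \<in> (\<Union>h\<in>I. acts G h j)" if "I \<in> infosets G j" for I
      using s that wf_gameD(6)[OF wf] by (auto simp: strat_def infosets_def)
    then show "s \<in> (\<Pi>\<^sub>E I\<in>infosets G j. \<Union>h\<in>I. acts G h j)"
      using s by (auto simp: strat_def)
  qed
  have "finite (\<Union>h\<in>I. acts G h j)" if I: "I \<in> infosets G j" for I
  proof (rule finite_UN_I)
    show "finite I"
      using infosetsD(1)[OF wf I] wf_gameD(2)[OF wf] by (meson active_def finite_subset subsetI)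
    show "finite (acts G h j)" if "h \<in> I" for h
      using finite_acts[OF wf infosetsD(1)[OF wf I that]] .
  qed
  then show "finite (\<Pi>\<^sub>E I\<in>infosets G j. \<Union>h\<in>I. acts G h j)"
    by (intro finite_PiE finite_infosets wf)
qed

lemma finite_oppstrat:
  assumes "wf_game G"
  shows "finite (oppstrat G i)"
  unfolding oppstrat_def using wf_gameD(1) finite_strat assms by (intro finite_PiE) auto

definition payoff :: "('p, 'a) efg \<Rightarrow> 'p \<Rightarrow> ('p, 'a) strategy \<Rightarrow> ('p, 'a) profile \<Rightarrow> real" where
  "payoff G i s \<tau> = util G i (outcome G (\<tau>(i := s)))"

lemma EU_eq_sum_payoff: "EU G i b s = (\<Sum>\<tau>\<in>oppstrat G i. pmf b \<tau> * payoff G i s \<tau>)"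
  unfolding EU_def payoff_def ..

lemma EU_cond_pmf:
  assumes "finite (oppstrat G i)" "A \<subseteq> oppstrat G i" "set_pmf b \<inter> A \<noteq> {}"
  shows "EU G i (cond_pmf b A) s = (\<Sum>\<tau>\<in>A. pmf b \<tau> * payoff G i s \<tau>) / measure_pmf.prob b A"
proof -
  have "EU G i (cond_pmf b A) s =
      (\<Sum>\<tau>\<in>oppstrat G i. if \<tau> \<in> A then pmf b \<tau> * payoff G i s \<tau> / measure_pmf.prob b A else 0)"
    unfolding EU_eq_sum_payoff by (intro sum.cong) (auto simp: pmf_cond[OF assms(3)])
  also have "\<dots> = (\<Sum>\<tau>\<in>A. pmf b \<tau> * payoff G i s \<tau>) / measure_pmf.prob b A"
    using assms(1,2) by (simp add: sum.If_cases Int_absorb1 sum_divide_distrib)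
  finally show ?thesis .
qed

lemma EU_cond_pmf_le_iff:
  assumes "finite (oppstrat G i)" "A \<subseteq> oppstrat G i" "set_pmf b \<inter> A \<noteq> {}"
  shows "EU G i (cond_pmf b A) t \<le> EU G i (cond_pmf b A) s \<longleftrightarrow>
    (\<Sum>\<tau>\<in>A. pmf b \<tau> * payoff G i t \<tau>) \<le> (\<Sum>\<tau>\<in>A. pmf b \<tau> * payoff G i s \<tau>)"
proof -
  have "measure_pmf.prob b A > 0" using assms(3) measure_pmf_posI by (metis disjoint_iff)
  then show ?thesis unfolding EU_cond_pmf[OF assms] by (simp add: divide_le_cancel)
qed

lemma conditional_belief_le_iff:
  assumes wf: "wf_game G" and fs: "full_support_nf G i b" and cw: "consistent_with G i b bs"
    and I: "I \<in> infosets G i" and ne: "oppreach G i I \<noteq> {}"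
  shows "EU G i (bs I) t \<le> EU G i (bs I) s \<longleftrightarrow>
    (\<Sum>\<tau>\<in>oppreach G i I. pmf b \<tau> * payoff G i t \<tau>) \<le> (\<Sum>\<tau>\<in>oppreach G i I. pmf b \<tau> * payoff G i s \<tau>)"
proof -
  have sub: "oppreach G i I \<subseteq> oppstrat G i" by (auto simp: oppreach_def)
  with fs ne have "set_pmf b \<inter> oppreach G i I \<noteq> {}" unfolding full_support_nf_def by blast
  moreover have "bs I = cond_pmf b (oppreach G i I)" using cw I by (simp add: consistent_with_def)
  ultimately show ?thesis using EU_cond_pmf_le_iff[OF finite_oppstrat[OF wf] sub] by simp
qed

section \<open>Perfect recall\<close>

lemma set_exper_iff:
  "x \<in> set (exper G j h) \<longleftrightarrow>
    (\<exists>k<length h. active G (take k h) j \<and> x = (info G j (take k h), the ((h ! k) j)))"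
  unfolding exper_def by (auto split: if_splits)

lemma exper_eq_Nil_iff: "exper G j h = [] \<longleftrightarrow> (\<forall>k<length h. \<not> active G (take k h) j)"
  using set_exper_iff[of _ G j h] by (metis last_in_set set_empty2 equals0D)

lemma exper_strict_prefix:
  assumes "strict_prefix h g" "active G h j"
  shows "(info G j h, the ((g ! length h) j)) \<in> set (exper G j g)"
  using assms unfolding set_exper_iff strict_prefix_def prefix_def
  by (intro exI[of _ "length h"]) auto

lemma exper_eq_Nil_strict_prefix:
  assumes "exper G j g = []" "strict_prefix h g"
  shows "\<not> active G h j"
  using exper_strict_prefix[OF assms(2)] assms(1) by fastforce

lemma exper_eq_info:
  assumes "perfect_recall G" "j \<in> players G" "active G h j" "h' \<in> info G j h"
  shows "exper G j h = exper G j h'"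
  using assms unfolding perfect_recall_def by blast

text \<open>By perfect recall, the opponent profiles reaching \<open>I\<close> are the same for all own
  strategies that reach \<open>I\<close> at all.\<close>

lemma consistent_if_reaches_infoset:
  assumes wf: "wf_game G" and pr: "perfect_recall G" and i: "i \<in> players G"
    and I: "I \<in> infosets G i"
    and h0: "h0 \<in> I" "consistent G (\<tau>(i := s0)) h0"
    and h1: "h1 \<in> I" "consistent G (\<tau>0(i := s)) h1"
  shows "consistent G (\<tau>(i := s)) h0"
proof (rule consistent_fun_upd_cong[OF h0(2)])
  fix k assume k: "k < length h0" and a: "active G (take k h0) i"
  let ?J = "info G i (take k h0)"
  have "exper G i h0 = exper G i h1"
    using exper_eq_info[OF pr i] infosetsD[OF wf I h0(1)] h1(1) by blast
  moreover have "(?J, the ((h0 ! k) i)) \<in> set (exper G i h0)"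
    using k a unfolding set_exper_iff by blast
  ultimately have "(?J, the ((h0 ! k) i)) \<in> set (exper G i h1)" by simp
  then obtain k' where k': "k' < length h1" "active G (take k' h1) i"
     "?J = info G i (take k' h1)" "the ((h0 ! k) i) = the ((h1 ! k') i)"
    unfolding set_exper_iff by blast
  then show "s ?J = s0 ?J"
    using h0(2) h1(2) k a by (simp add: consistent_def)
qed

lemma oppreach_consistentE:
  assumes wf: "wf_game G" and pr: "perfect_recall G" and i: "i \<in> players G"
    and I: "I \<in> infosets G i" and sS: "s \<in> strat G i" and s: "strat_reaches G i s I"
    and \<tau>: "\<tau> \<in> oppreach G i I"
  obtains h where "h \<in> I" "consistent G (\<tau>(i := s)) h"
proof -
  obtain \<tau>0 where "\<tau>0 \<in> oppstrat G i" "reaches G (\<tau>0(i := s)) I"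
    using s by (auto simp: strat_reaches_def)
  then obtain h1 where h1: "h1 \<in> I" "consistent G (\<tau>0(i := s)) h1"
    using reaches_iff_consistent[OF wf strategy_profile_fun_upd] sS by blast
  obtain s0 where "\<tau> \<in> oppstrat G i" "s0 \<in> strat G i" "reaches G (\<tau>(i := s0)) I"
    using \<tau> by (auto simp: oppreach_def)
  then obtain h0 where h0: "h0 \<in> I" "consistent G (\<tau>(i := s0)) h0"
    using reaches_iff_consistent[OF wf strategy_profile_fun_upd] by blast
  show thesis using that h0 consistent_if_reaches_infoset[OF wf pr i I h0 h1] by blast
qed

lemma precedes_info_take:
  assumes wf: "wf_game G" and h: "h \<in> I" and k: "k < length h" and a: "active G (take k h) i"
  shows "precedes G (info G i (take k h)) I"
proof -
  have "take k h \<noteq> h" using k by (metis length_take min.absorb4 less_irrefl)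
  then have "strict_prefix (take k h) h" by (simp add: strict_prefix_def take_is_prefix)
  then show ?thesis using wf_gameD(6)[OF wf a] h unfolding precedes_def by blast
qed

section \<open>Normal-form optimality implies sequential rationality\<close>

definition splice_after :: "('p, 'a) efg \<Rightarrow> 'p \<Rightarrow> ('p, 'a) hist set
    \<Rightarrow> ('p, 'a) strategy \<Rightarrow> ('p, 'a) strategy \<Rightarrow> ('p, 'a) strategy" where
  "splice_after G i I s s' J =
    (if J \<in> infosets G i \<and> (\<exists>h\<in>I. \<exists>g\<in>J. prefix h g) then s' J else s J)"

lemma splice_after_strat:
  "s \<in> strat G i \<Longrightarrow> s' \<in> strat G i \<Longrightarrow> splice_after G i I s s' \<in> strat G i"
  by (auto simp: strat_def splice_after_def)

lemma prefix_in_infoset_if_follows: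
  assumes wf: "wf_game G" and pr: "perfect_recall G" and i: "i \<in> players G"
    and I: "I \<in> infosets G i" and h: "h \<in> I" and hg: "prefix h g"
    and a: "active G g' i" and g: "g \<in> info G i g'"
  obtains k where "take k g' \<in> I"
proof (cases "h = g")
  case True
  then have "info G i g' = I" using infosetsD[OF wf I h] wf_gameD(7)[OF wf a g] by simp
  then show thesis using that[of "length g'"] wf_gameD(6)[OF wf a] by simp
next
  case False
  then have "strict_prefix h g" using hg by (simp add: strict_prefix_def)
  then have "(I, the ((g ! length h) i)) \<in> set (exper G i g)"
    using exper_strict_prefix infosetsD[OF wf I h] by metis
  then have "(I, the ((g ! length h) i)) \<in> set (exper G i g')"
    using exper_eq_info[OF pr i a g] by simp
  then obtain k where "active G (take k g') i" "I = info G i (take k g')"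
    unfolding set_exper_iff by blast
  then show thesis using that wf_gameD(6)[OF wf] by blast
qed

lemma outcome_splice_after_notin_oppreach:
  assumes wf: "wf_game G" and pr: "perfect_recall G" and i: "i \<in> players G"
    and I: "I \<in> infosets G i" and sS: "s \<in> strat G i"
    and \<tau>: "\<tau> \<in> oppstrat G i" "\<tau> \<notin> oppreach G i I"
  shows "outcome G (\<tau>(i := splice_after G i I s s')) = outcome G (\<tau>(i := s))"
proof (rule outcome_fun_upd_cong[OF wf \<tau>(1) sS])
  let ?z = "outcome G (\<tau>(i := s))"
  have \<sigma>: "strategy_profile G (\<tau>(i := s))" using \<tau>(1) sS by (rule strategy_profile_fun_upd)
  fix k assume a: "active G (take k ?z) i"
  show "splice_after G i I s s' (info G i (take k ?z)) = s (info G i (take k ?z))"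
  proof (rule ccontr)
    assume "splice_after G i I s s' (info G i (take k ?z)) \<noteq> s (info G i (take k ?z))"
    then obtain h g where "h \<in> I" "g \<in> info G i (take k ?z)" "prefix h g"
      by (auto simp: splice_after_def split: if_splits)
    then obtain k' where "take k' (take k ?z) \<in> I"
      using prefix_in_infoset_if_follows[OF wf pr i I _ _ a] by blast
    moreover have "consistent G (\<tau>(i := s)) (take k' (take k ?z))"
      using consistent_take[OF wf consistent_take[OF wf consistent_outcome[OF wf \<sigma>]]] .
    ultimately have "\<tau> \<in> oppreach G i I"
      using \<tau>(1) sS reaches_iff_consistent[OF wf \<sigma>] by (auto simp: oppreach_def)
    with \<tau>(2) show False ..
  qed
qed

lemma outcome_splice_after_oppreach:
  assumes wf: "wf_game G" and pr: "perfect_recall G" and i: "i \<in> players G"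
    and I: "I \<in> infosets G i" and sS: "s \<in> strat G i" and s: "strat_reaches G i s I"
    and rep: "replacement G i I s s'" and \<tau>: "\<tau> \<in> oppreach G i I"
  shows "outcome G (\<tau>(i := splice_after G i I s s')) = outcome G (\<tau>(i := s'))"
proof -
  have \<tau>O: "\<tau> \<in> oppstrat G i" using \<tau> by (simp add: oppreach_def)
  have s'S: "s' \<in> strat G i" using rep by (simp add: replacement_def)
  obtain h0 where h0: "h0 \<in> I" "consistent G (\<tau>(i := s)) h0"
    using oppreach_consistentE[OF wf pr i I sS s \<tau>] .
  have before: "s' (info G i (take k h0)) = s (info G i (take k h0))"
    if "k < length h0" "active G (take k h0) i" for k
    using rep precedes_info_take[OF wf h0(1) that] that(2)
    by (auto simp: replacement_def infosets_def)
  then have "consistent G (\<tau>(i := s')) h0" by (rule consistent_fun_upd_cong[OF h0(2)])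
  then have pz: "prefix h0 (outcome G (\<tau>(i := s')))"
    by (rule consistent_prefix_outcome[OF wf strategy_profile_fun_upd[OF \<tau>O s'S]])
  show ?thesis
  proof (rule outcome_fun_upd_cong[OF wf \<tau>O s'S])
    let ?z = "outcome G (\<tau>(i := s'))"
    fix k assume k: "k < length ?z" and a: "active G (take k ?z) i"
    show "splice_after G i I s s' (info G i (take k ?z)) = s' (info G i (take k ?z))"
    proof (cases "k < length h0")
      case True
      then have "take k ?z = take k h0" using pz by (auto simp: prefix_def)
      then show ?thesis using before[OF True] a by (simp add: splice_after_def)
    next
      case False
      then have "prefix h0 (take k ?z)" using pz by (auto simp: prefix_def)
      then show ?thesis using h0(1) a wf_gameD(6)[OF wf a]
        by (auto simp: splice_after_def infosets_def)
    qed
  qed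
qed

lemma nf_L1_subset_strong_L1:
  assumes wf: "wf_game G" and pr: "perfect_recall G" and i: "i \<in> players G"
    and fs: "full_support_nf G i b" and cw: "consistent_with G i b bs"
  shows "nf_L1 G i b \<subseteq> strong_L1 G i bs"
proof
  fix s assume s: "s \<in> nf_L1 G i b"
  then have sS: "s \<in> strat G i" by (simp add: nf_L1_def)
  have "rational_at G i bs s I" if I: "I \<in> infosets G i" for I
  proof (cases "strat_reaches G i s I")
    case True
    let ?O = "oppstrat G i" and ?A = "oppreach G i I"
    have AO: "?A \<subseteq> ?O" by (auto simp: oppreach_def)
    have ne: "?A \<noteq> {}" using True sS by (auto simp: strat_reaches_def oppreach_def)
    have split: "EU G i b t =
        (\<Sum>\<tau>\<in>?O - ?A. pmf b \<tau> * payoff G i t \<tau>) + (\<Sum>\<tau>\<in>?A. pmf b \<tau> * payoff G i t \<tau>)"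
      for t unfolding EU_eq_sum_payoff by (rule sum.subset_diff[OF AO finite_oppstrat[OF wf]])
    have "EU G i (bs I) s' \<le> EU G i (bs I) s" if rep: "replacement G i I s s'" for s'
    proof -
      let ?s'' = "splice_after G i I s s'"
      have "?s'' \<in> strat G i" using splice_after_strat[OF sS] rep by (simp add: replacement_def)
      then have "EU G i b ?s'' \<le> EU G i b s" using s by (simp add: nf_L1_def)
      moreover have "payoff G i ?s'' \<tau> = payoff G i s \<tau>" if "\<tau> \<in> ?O - ?A" for \<tau>
        using outcome_splice_after_notin_oppreach[OF wf pr i I sS] that by (simp add: payoff_def)
      moreover have "payoff G i ?s'' \<tau> = payoff G i s' \<tau>" if "\<tau> \<in> ?A" for \<tau>
        using outcome_splice_after_oppreach[OF wf pr i I sS True rep that] by (simp add: payoff_def)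
      ultimately have
        "(\<Sum>\<tau>\<in>?A. pmf b \<tau> * payoff G i s' \<tau>) \<le> (\<Sum>\<tau>\<in>?A. pmf b \<tau> * payoff G i s \<tau>)"
        unfolding split by simp
      then show ?thesis using conditional_belief_le_iff[OF wf fs cw I ne] by simp
    qed
    then show ?thesis by (simp add: rational_at_def)
  qed (simp add: rational_at_def)
  with sS show "s \<in> strong_L1 G i bs" by (simp add: strong_L1_def)
qed

section \<open>Sequential rationality implies normal-form optimality\<close>

definition initial_infosets :: "('p, 'a) efg \<Rightarrow> 'p \<Rightarrow> ('p, 'a) hist set set" where
  "initial_infosets G i = {I \<in> infosets G i. \<forall>h\<in>I. exper G i h = []}"

definition oppstrat_no_move :: "('p, 'a) efg \<Rightarrow> 'p \<Rightarrow> ('p, 'a) strategy \<Rightarrow> ('p, 'a) profile set" where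
  "oppstrat_no_move G i s = {\<tau> \<in> oppstrat G i. exper G i (outcome G (\<tau>(i := s))) = []}"

lemma initial_infoset_consistentE:
  assumes wf: "wf_game G" and I: "I \<in> initial_infosets G i" and \<tau>: "\<tau> \<in> oppreach G i I"
  obtains h where "h \<in> I" "consistent G (\<tau>(i := t)) h"
proof -
  obtain s0 where "\<tau> \<in> oppstrat G i" "s0 \<in> strat G i" "reaches G (\<tau>(i := s0)) I"
    using \<tau> by (auto simp: oppreach_def)
  then obtain h where h: "h \<in> I" "consistent G (\<tau>(i := s0)) h"
    using reaches_iff_consistent[OF wf strategy_profile_fun_upd] by blast
  have "exper G i h = []" using I h(1) by (simp add: initial_infosets_def)
  then have "consistent G (\<tau>(i := t)) h"
    by (intro consistent_fun_upd_cong[OF h(2)]) (simp add: exper_eq_Nil_iff)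
  with h(1) show thesis by (rule that)
qed

lemma oppstrat_no_move_disjoint_oppreach:
  assumes wf: "wf_game G" and sS: "s \<in> strat G i" and I: "I \<in> initial_infosets G i"
  shows "oppstrat_no_move G i s \<inter> oppreach G i I = {}"
proof (intro equals0I)
  fix \<tau> assume \<tau>: "\<tau> \<in> oppstrat_no_move G i s \<inter> oppreach G i I"
  then have \<sigma>: "strategy_profile G (\<tau>(i := s))"
    using sS by (auto simp: oppstrat_no_move_def intro: strategy_profile_fun_upd)
  let ?z = "outcome G (\<tau>(i := s))"
  obtain h where h: "h \<in> I" "consistent G (\<tau>(i := s)) h"
    using initial_infoset_consistentE[OF wf I] \<tau> by blast
  have a: "active G h i" using I h(1) infosetsD(1)[OF wf] by (auto simp: initial_infosets_def)
  then have "h \<noteq> ?z" using terminal_outcome[OF wf \<sigma>] by (auto simp: terminal_def)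
  then have "strict_prefix h ?z"
    using consistent_prefix_outcome[OF wf \<sigma> h(2)] by (simp add: strict_prefix_def)
  then show False
    using exper_eq_Nil_strict_prefix[of G i ?z h] a \<tau> by (auto simp: oppstrat_no_move_def)
qed

lemma oppreach_initial_disjoint:
  assumes wf: "wf_game G" and I: "I \<in> initial_infosets G i" and J: "J \<in> initial_infosets G i"
    and "I \<noteq> J"
  shows "oppreach G i I \<inter> oppreach G i J = {}"
proof (intro equals0I)
  fix \<tau> assume \<tau>: "\<tau> \<in> oppreach G i I \<inter> oppreach G i J"
  \<comment> \<open>any own strategy \<open>s\<close> will do: player \<open>i\<close> does not move before reaching either set\<close>
  obtain hI where hI: "hI \<in> I" "consistent G (\<tau>(i := s)) hI"
    using initial_infoset_consistentE[OF wf I] \<tau> by blast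
  obtain hJ where hJ: "hJ \<in> J" "consistent G (\<tau>(i := s)) hJ"
    using initial_infoset_consistentE[OF wf J] \<tau> by blast
  have I': "I \<in> infosets G i" "exper G i hI = []" using I hI(1) by (auto simp: initial_infosets_def)
  have J': "J \<in> infosets G i" "exper G i hJ = []" using J hJ(1) by (auto simp: initial_infosets_def)
  have "\<not> strict_prefix hI hJ" "\<not> strict_prefix hJ hI"
    using exper_eq_Nil_strict_prefix[of G i] infosetsD(1)[OF wf I'(1) hI(1)]
      infosetsD(1)[OF wf J'(1) hJ(1)] I'(2) J'(2) by metis+
  then have "hI = hJ"
    using consistent_prefix_cases[OF hI(2) hJ(2)] by (auto simp: strict_prefix_def)
  then show False using infosetsD(2)[OF wf I'(1) hI(1)] infosetsD(2)[OF wf J'(1) hJ(1)] \<open>I \<noteq> J\<close>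
    by simp
qed

lemma first_move_in_initial_infoset:
  assumes wf: "wf_game G" and pr: "perfect_recall G" and i: "i \<in> players G"
    and \<tau>: "\<tau> \<in> oppstrat G i" and sS: "s \<in> strat G i"
    and moves: "exper G i (outcome G (\<tau>(i := s))) \<noteq> []"
  shows "\<exists>I\<in>initial_infosets G i. \<tau> \<in> oppreach G i I"
proof -
  let ?z = "outcome G (\<tau>(i := s))"
  have \<sigma>: "strategy_profile G (\<tau>(i := s))" using \<tau> sS by (rule strategy_profile_fun_upd)
  obtain k0 where "k0 < length ?z" and a: "active G (take k0 ?z) i"
    and first: "\<forall>k<k0. \<not> (k < length ?z \<and> active G (take k ?z) i)"
    using moves exists_least_iff[of "\<lambda>k. k < length ?z \<and> active G (take k ?z) i"]
    by (auto simp: exper_eq_Nil_iff)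
  then have "exper G i (take k0 ?z) = []" using first by (simp add: exper_eq_Nil_iff)
  then have "info G i (take k0 ?z) \<in> initial_infosets G i"
    using exper_eq_info[OF pr i a] a by (auto simp: initial_infosets_def infosets_def)
  moreover have "\<tau> \<in> oppreach G i (info G i (take k0 ?z))"
    using \<tau> sS wf_gameD(6)[OF wf a] consistent_take[OF wf consistent_outcome[OF wf \<sigma>]]
      reaches_iff_consistent[OF wf \<sigma>] by (auto simp: oppreach_def)
  ultimately show ?thesis by blast
qed

lemma oppstrat_eq_no_move_Un_oppreach:
  assumes wf: "wf_game G" and pr: "perfect_recall G" and i: "i \<in> players G" and sS: "s \<in> strat G i"
  shows "oppstrat G i = oppstrat_no_move G i s \<union> (\<Union>I\<in>initial_infosets G i. oppreach G i I)"
  using first_move_in_initial_infoset[OF wf pr i _ sS]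
  by (auto simp: oppstrat_no_move_def oppreach_def)

lemma outcome_no_move:
  assumes wf: "wf_game G" and sS: "s \<in> strat G i" and \<tau>: "\<tau> \<in> oppstrat_no_move G i s"
  shows "outcome G (\<tau>(i := t)) = outcome G (\<tau>(i := s))"
  using \<tau> by (intro outcome_fun_upd_cong[OF wf _ sS]) (auto simp: oppstrat_no_move_def exper_eq_Nil_iff)

lemma replacement_initial_infoset:
  assumes wf: "wf_game G" and I: "I \<in> initial_infosets G i" and tS: "t \<in> strat G i"
  shows "replacement G i I s t"
  unfolding replacement_def
proof (intro conjI tS ballI impI)
  fix J assume J: "J \<in> infosets G i" and "precedes G J I"
  then obtain h' h where "h' \<in> J" "h \<in> I" "strict_prefix h' h" by (auto simp: precedes_def)
  then show "t J = s J"
    using exper_eq_Nil_strict_prefix infosetsD(1)[OF wf J] I by (fastforce simp: initial_infosets_def)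
qed

lemma strong_L1_sum_oppreach_initial_le:
  assumes wf: "wf_game G" and fs: "full_support_nf G i b" and cw: "consistent_with G i b bs"
    and s: "s \<in> strong_L1 G i bs" and I: "I \<in> initial_infosets G i" and tS: "t \<in> strat G i"
  shows "(\<Sum>\<tau>\<in>oppreach G i I. pmf b \<tau> * payoff G i t \<tau>)
    \<le> (\<Sum>\<tau>\<in>oppreach G i I. pmf b \<tau> * payoff G i s \<tau>)"
proof (cases "oppreach G i I = {}")
  case False
  then obtain \<tau> where \<tau>: "\<tau> \<in> oppreach G i I" by blast
  have sS: "s \<in> strat G i" and I': "I \<in> infosets G i"
    using s I by (auto simp: strong_L1_def initial_infosets_def)
  have \<tau>O: "\<tau> \<in> oppstrat G i" using \<tau> by (simp add: oppreach_def)
  obtain h where "h \<in> I" "consistent G (\<tau>(i := s)) h"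
    using initial_infoset_consistentE[OF wf I \<tau>] .
  then have "strat_reaches G i s I"
    using \<tau>O reaches_iff_consistent[OF wf strategy_profile_fun_upd[OF \<tau>O sS]]
    by (auto simp: strat_reaches_def)
  moreover have "rational_at G i bs s I" using s I' by (simp add: strong_L1_def)
  ultimately have "EU G i (bs I) t \<le> EU G i (bs I) s"
    using replacement_initial_infoset[OF wf I tS] by (simp add: rational_at_def)
  then show ?thesis using conditional_belief_le_iff[OF wf fs cw I' False] by simp
qed simp

lemma strong_L1_subset_nf_L1:
  assumes wf: "wf_game G" and pr: "perfect_recall G" and i: "i \<in> players G"
    and fs: "full_support_nf G i b" and cw: "consistent_with G i b bs"
  shows "strong_L1 G i bs \<subseteq> nf_L1 G i b"
proof
  fix s assume s: "s \<in> strong_L1 G i bs"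
  then have sS: "s \<in> strat G i" by (simp add: strong_L1_def)
  let ?Z = "oppstrat_no_move G i s" and ?M = "initial_infosets G i" and ?A = "oppreach G i"
  have split: "EU G i b t = (\<Sum>\<tau>\<in>?Z. pmf b \<tau> * payoff G i t \<tau>)
      + (\<Sum>I\<in>?M. \<Sum>\<tau>\<in>?A I. pmf b \<tau> * payoff G i t \<tau>)" for t
  proof -
    note cover = oppstrat_eq_no_move_Un_oppreach[OF wf pr i sS]
    have fin: "finite ?Z" "\<forall>I\<in>?M. finite (?A I)"
      using finite_oppstrat[OF wf] by (auto simp: oppstrat_no_move_def oppreach_def)
    have finM: "finite ?M"
      using finite_infosets[OF wf] by (rule finite_subset[rotated]) (auto simp: initial_infosets_def)
    have "EU G i b t = (\<Sum>\<tau>\<in>?Z. pmf b \<tau> * payoff G i t \<tau>)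
        + (\<Sum>\<tau>\<in>(\<Union>I\<in>?M. ?A I). pmf b \<tau> * payoff G i t \<tau>)"
      unfolding EU_eq_sum_payoff cover
      by (rule sum.union_disjoint)
        (use fin finM oppstrat_no_move_disjoint_oppreach[OF wf sS] in auto)
    also have "(\<Sum>\<tau>\<in>(\<Union>I\<in>?M. ?A I). pmf b \<tau> * payoff G i t \<tau>)
        = (\<Sum>I\<in>?M. \<Sum>\<tau>\<in>?A I. pmf b \<tau> * payoff G i t \<tau>)"
      by (rule sum.UNION_disjoint[OF finM fin(2)]) (use oppreach_initial_disjoint[OF wf] in blast)
    finally show ?thesis .
  qed
  have "EU G i b t \<le> EU G i b s" if tS: "t \<in> strat G i" for t
  proof -
    have "payoff G i t \<tau> = payoff G i s \<tau>" if "\<tau> \<in> ?Z" for \<tau>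
      using outcome_no_move[OF wf sS that, of t] by (simp add: payoff_def)
    moreover have "(\<Sum>I\<in>?M. \<Sum>\<tau>\<in>?A I. pmf b \<tau> * payoff G i t \<tau>)
        \<le> (\<Sum>I\<in>?M. \<Sum>\<tau>\<in>?A I. pmf b \<tau> * payoff G i s \<tau>)"
      using strong_L1_sum_oppreach_initial_le[OF wf fs cw s _ tS] by (rule sum_mono)
    ultimately show ?thesis unfolding split by simp
  qed
  with sS show "s \<in> nf_L1 G i b" by (simp add: nf_L1_def)
qed

theorem proposition3:
  fixes G :: "('p, 'a) efg"
    and bbar :: "'p \<Rightarrow> ('p, 'a) hist set \<Rightarrow> ('p, 'a) profile pmf"
    and b :: "'p \<Rightarrow> ('p, 'a) profile pmf"
  assumes "wf_game G"
    and "perfect_recall G"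
    and "\<forall>i\<in>players G. full_support_bs G i (bbar i)"
    and "\<forall>i\<in>players G. full_support_nf G i (b i)"
    and "\<forall>i\<in>players G. consistent_with G i (b i) (bbar i)"
  shows "\<forall>i\<in>players G. strong_L1 G i (bbar i) = nf_L1 G i (b i)"
proof
  fix i assume i: "i \<in> players G"
  then have "full_support_nf G i (b i)" "consistent_with G i (b i) (bbar i)"
    using assms(4,5) by auto
  then show "strong_L1 G i (bbar i) = nf_L1 G i (b i)"
    using strong_L1_subset_nf_L1[OF assms(1,2) i] nf_L1_subset_strong_L1[OF assms(1,2) i]
    by (intro equalityI)
qed

end
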